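(* Let $p\geq 2$, $q\geq 1$ and $k_1\geq \cdots\geq k_q\geq 1$ be fixed integers, and let $H$ be an $n$-vertex $S^{p+1}_{k_1,\dots,k_q}$-free graph with maximum spectral radius among all such graphs. Then $\rho(H)\geq \frac{p-1}{p}n+O(1)$, where the implied constant depends only on $p,q$ (and not on $n$).
   Context: $S_{k_1,\dots,k_q}$ is the vertex-disjoint union of stars with $k_1,\dots,k_q$ edges. For a graph $G$ and integer $p\ge 2$, the edge blow-up $G^{p+1}$ is obtained by replacing each edge of $G$ by a clique of order $p+1$ containing it, with all new vertices of the different cliques distinct. $\rho(H)$ is the largest eigenvalue of the adjacency matrix of $H$. *)

theory Defs
  imports "Jordan_Normal_Form.Char_Poly"
begin

definition sgraph :: "nat \<Rightarrow> (nat \<Rightarrow> nat \<Rightarrow> bool) \<Rightarrow> bool" where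
  "sgraph n E \<longleftrightarrow> (\<forall>u v. E u v \<longrightarrow> u < n \<and> v < n \<and> u \<noteq> v \<and> E v u)"

definition adj_mat :: "nat \<Rightarrow> (nat \<Rightarrow> nat \<Rightarrow> bool) \<Rightarrow> real mat" where
  "adj_mat n E = mat n n (\<lambda>(i, j). if E i j then 1 else 0)"

definition spec_rad :: "nat \<Rightarrow> (nat \<Rightarrow> nat \<Rightarrow> bool) \<Rightarrow> real" where
  "spec_rad n E = Max {x. eigenvalue (adj_mat n E) x}"

definition contains_subgraph ::
  "nat \<Rightarrow> (nat \<Rightarrow> nat \<Rightarrow> bool) \<Rightarrow> 'a set \<Rightarrow> ('a \<Rightarrow> 'a \<Rightarrow> bool) \<Rightarrow> bool" where
  "contains_subgraph n E VF EF \<longleftrightarrow>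
     (\<exists>\<phi>. inj_on \<phi> VF \<and> \<phi> ` VF \<subseteq> {0..<n} \<and>
          (\<forall>u\<in>VF. \<forall>v\<in>VF. EF u v \<longrightarrow> E (\<phi> u) (\<phi> v)))"

text \<open>Union of vertex-disjoint stars S_{k_1,...,k_q}, ks = [k_1,...,k_q]:
  star j has centre (j,0) and leaves (j,c), 1 \<le> c \<le> k_j.\<close>
definition sf_verts :: "nat list \<Rightarrow> (nat \<times> nat) set" where
  "sf_verts ks = {(j, c). j < length ks \<and> c \<le> ks ! j}"

definition sf_adj :: "nat list \<Rightarrow> (nat \<times> nat) \<Rightarrow> (nat \<times> nat) \<Rightarrow> bool" where
  "sf_adj ks x y \<longleftrightarrow> x \<in> sf_verts ks \<and> y \<in> sf_verts ks \<and> fst x = fst y \<and>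
      ((snd x = 0 \<and> snd y \<noteq> 0) \<or> (snd y = 0 \<and> snd x \<noteq> 0))"

text \<open>Edge blow-up G^{p+1}: every edge e of G gets p-1 new vertices (Inr (e,i), i < p-1)
  forming, together with the two ends of e, a clique of order p+1.\<close>
definition edge_set :: "'a set \<Rightarrow> ('a \<Rightarrow> 'a \<Rightarrow> bool) \<Rightarrow> 'a set set" where
  "edge_set V E = {{u, v} | u v. u \<in> V \<and> v \<in> V \<and> E u v}"

definition blowup_verts :: "'a set \<Rightarrow> ('a \<Rightarrow> 'a \<Rightarrow> bool) \<Rightarrow> nat \<Rightarrow> ('a + ('a set \<times> nat)) set" where
  "blowup_verts V E p = Inl ` V \<union> {Inr (e, i) | e i. e \<in> edge_set V E \<and> i < p - 1}"

fun blowup_adj_aux :: "('a \<Rightarrow> 'a \<Rightarrow> bool) \<Rightarrow> ('a + ('a set \<times> nat)) \<Rightarrow> ('a + ('a set \<times> nat)) \<Rightarrow> bool" where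
  "blowup_adj_aux E (Inl u) (Inl v) = E u v"
| "blowup_adj_aux E (Inl u) (Inr (e, i)) = (u \<in> e)"
| "blowup_adj_aux E (Inr (e, i)) (Inl v) = (v \<in> e)"
| "blowup_adj_aux E (Inr (e, i)) (Inr (f, j)) = (e = f \<and> i \<noteq> j)"

definition blowup_adj :: "'a set \<Rightarrow> ('a \<Rightarrow> 'a \<Rightarrow> bool) \<Rightarrow> nat \<Rightarrow> ('a + ('a set \<times> nat)) \<Rightarrow> ('a + ('a set \<times> nat)) \<Rightarrow> bool" where
  "blowup_adj V E p x y \<longleftrightarrow> x \<in> blowup_verts V E p \<and> y \<in> blowup_verts V E p \<and> blowup_adj_aux E x y"

definition bsf_free :: "nat \<Rightarrow> nat list \<Rightarrow> nat \<Rightarrow> (nat \<Rightarrow> nat \<Rightarrow> bool) \<Rightarrow> bool" where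
  "bsf_free p ks n E \<longleftrightarrow>
     \<not> contains_subgraph n E (blowup_verts (sf_verts ks) (sf_adj ks) p) (blowup_adj (sf_verts ks) (sf_adj ks) p)"

definition spex :: "nat \<Rightarrow> nat list \<Rightarrow> nat \<Rightarrow> (nat \<Rightarrow> nat \<Rightarrow> bool) \<Rightarrow> bool" where
  "spex p ks n E \<longleftrightarrow> sgraph n E \<and> bsf_free p ks n E \<and>
     (\<forall>E'. sgraph n E' \<and> bsf_free p ks n E' \<longrightarrow> spec_rad n E' \<le> spec_rad n E)"

end

theory Submission
  imports Defs
begin

text \<open>The Turan graph with p classes of size m = n div p, padded by isolated vertices, has
  no clique of order p + 1, whereas any edge of the star forest already yields such a clique in
  its edge blow-up. So this graph is a competitor of the extremal graph. It is (p-1)m-regular on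
  its non-isolated vertices, hence has (p-1)m \<ge> (p-1)n/p - (p-1) as an eigenvalue.\<close>

lemma finite_eigenvalues_adj_mat: "finite {x. eigenvalue (adj_mat n E) x}"
proof -
  have A: "adj_mat n E \<in> carrier_mat n n" by (simp add: adj_mat_def)
  have "char_poly (adj_mat n E) \<noteq> 0"
    using degree_monic_char_poly[OF A] by (metis coeff_0 zero_neq_one)
  then have "finite {x. poly (char_poly (adj_mat n E)) x = 0}" by (rule poly_roots_finite)
  then show ?thesis using eigenvalue_root_char_poly[OF A] by simp
qed

lemma eigenvalue_le_spec_rad: "eigenvalue (adj_mat n E) x \<Longrightarrow> x \<le> spec_rad n E"
  unfolding spec_rad_def using finite_eigenvalues_adj_mat by (intro Max_ge) auto

lemma eigenvalue_adj_mat_regular: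
  assumes "sgraph n E" and "S \<subseteq> {..<n}" and "S \<noteq> {}"
    and edges_in_S: "\<And>u v. E u v \<Longrightarrow> u \<in> S"
    and degree: "\<And>u. u \<in> S \<Longrightarrow> card {v. E u v} = d"
  shows "eigenvalue (adj_mat n E) (real d)"
proof -
  have in_S: "v \<in> S" if "E u v" for u v
    using \<open>sgraph n E\<close> that edges_in_S unfolding sgraph_def by blast
  define x :: "real vec" where "x = vec n (\<lambda>i. if i \<in> S then 1 else 0)"
  have A: "adj_mat n E \<in> carrier_mat n n" by (simp add: adj_mat_def)
  have x: "x \<in> carrier_vec n" by (simp add: x_def)
  have "x \<noteq> 0\<^sub>v n"
  proof
    assume "x = 0\<^sub>v n"
    obtain i where "i \<in> S" using \<open>S \<noteq> {}\<close> by blast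
    then have "x $ i = 1" "i < n" using \<open>S \<subseteq> {..<n}\<close> by (auto simp: x_def)
    with \<open>x = 0\<^sub>v n\<close> show False by simp
  qed
  have "(adj_mat n E *\<^sub>v x) $ i = real d * x $ i" if "i < n" for i
  proof -
    have "(adj_mat n E *\<^sub>v x) $ i = (\<Sum>j\<in>{0..<n}. (if E i j then 1 else 0) * (if j \<in> S then 1 else 0))"
      using that by (simp add: adj_mat_def mult_mat_vec_def scalar_prod_def x_def)
    also have "\<dots> = (\<Sum>j\<in>{0..<n}. if j \<in> {j. E i j \<and> j \<in> S} then 1 else 0)"
      by (rule sum.cong) auto
    also have "\<dots> = real (card {j. E i j \<and> j \<in> S})"
    proof -
      have "{0..<n} \<inter> {j. E i j \<and> j \<in> S} = {j. E i j \<and> j \<in> S}"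
        using \<open>S \<subseteq> {..<n}\<close> by auto
      then show ?thesis by (simp only: sum.If_cases finite_atLeastLessThan) simp
    qed
    also have "{j. E i j \<and> j \<in> S} = (if i \<in> S then {j. E i j} else {})"
      by (cases "i \<in> S") (auto intro: in_S dest: edges_in_S)
    finally show ?thesis using degree by (simp add: x_def that)
  qed
  then have "adj_mat n E *\<^sub>v x = real d \<cdot>\<^sub>v x"
    using A x by (intro eq_vecI) auto
  then show ?thesis unfolding eigenvalue_def eigenvector_def using A x \<open>x \<noteq> 0\<^sub>v n\<close> by auto
qed

lemma card_residues_in:
  assumes "S \<subseteq> {..<p}"
  shows "card {j. j < p * m \<and> j mod p \<in> S} = m * card S"
proof -
  have "bij_betw (\<lambda>j. (j div p, j mod p)) {j. j < p * m \<and> j mod p \<in> S} ({..<m} \<times> S)"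
  proof (rule bij_betw_byWitness[where f' = "\<lambda>(k, s). k * p + s"])
    show "(\<lambda>(k, s). k * p + s) ` ({..<m} \<times> S) \<subseteq> {j. j < p * m \<and> j mod p \<in> S}"
    proof clarify
      fix k s assume "k < m" "s \<in> S"
      then have "s < p" using assms by auto
      have "k * p + s < Suc k * p" using \<open>s < p\<close> by simp
      also have "\<dots> \<le> p * m" using \<open>k < m\<close> by (metis Suc_leI mult.commute mult_le_mono1)
      finally show "k * p + s < p * m \<and> (k * p + s) mod p \<in> S" using \<open>s < p\<close> \<open>s \<in> S\<close> by simp
    qed
  qed (use assms in \<open>auto simp: less_mult_imp_div_less mult.commute\<close>)
  then show ?thesis by (simp add: bij_betw_same_card card_cartesian_product)
qed

definition turan_graph :: "nat \<Rightarrow> nat \<Rightarrow> nat \<Rightarrow> nat \<Rightarrow> bool" where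
  "turan_graph p m i j \<longleftrightarrow> i < p * m \<and> j < p * m \<and> i mod p \<noteq> j mod p"

lemma sgraph_turan_graph: "p * m \<le> n \<Longrightarrow> sgraph n (turan_graph p m)"
  unfolding sgraph_def turan_graph_def by auto

lemma degree_turan_graph:
  assumes "i < p * m"
  shows "card {j. turan_graph p m i j} = (p - 1) * m"
proof -
  have "p > 0" using assms by (cases p) auto
  then have "{j. turan_graph p m i j} = {j. j < p * m \<and> j mod p \<in> {..<p} - {i mod p}}"
    using assms by (auto simp: turan_graph_def)
  also have "card \<dots> = (p - 1) * m"
    using \<open>p > 0\<close> by (subst card_residues_in) auto
  finally show ?thesis .
qed

lemma spec_rad_turan_graph:
  assumes "p * m \<le> n" and "n \<ge> 1"
  shows "real ((p - 1) * m) \<le> spec_rad n (turan_graph p m)"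
proof (rule eigenvalue_le_spec_rad, rule eigenvalue_adj_mat_regular)
  \<comment> \<open>For m = 0 the graph is empty and the support {0} still gives the eigenvalue 0.\<close>
  show "{..<max 1 (p * m)} \<subseteq> {..<n}" using assms by auto
  show "{..<max 1 (p * m)} \<noteq> {}" by (simp add: lessThan_empty_iff)
  show "turan_graph p m u v \<Longrightarrow> u \<in> {..<max 1 (p * m)}" for u v
    by (auto simp: turan_graph_def)
  show "card {v. turan_graph p m u v} = (p - 1) * m" if "u \<in> {..<max 1 (p * m)}" for u
    using that degree_turan_graph[of u p m] by (cases "p * m = 0") (auto simp: turan_graph_def)
qed (use assms(1) in \<open>rule sgraph_turan_graph\<close>)

definition is_clique :: "('a \<Rightarrow> 'a \<Rightarrow> bool) \<Rightarrow> 'a set \<Rightarrow> bool" where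
  "is_clique E K \<longleftrightarrow> (\<forall>x\<in>K. \<forall>y\<in>K. x \<noteq> y \<longrightarrow> E x y)"

lemma card_clique_turan_graph:
  assumes "p > 0" and "is_clique (turan_graph p m) K"
  shows "card K \<le> p"
proof -
  have "inj_on (\<lambda>x. x mod p) K"
    using assms(2) by (auto simp: inj_on_def is_clique_def turan_graph_def)
  then have "card K = card ((\<lambda>x. x mod p) ` K)" by (simp add: card_image)
  also have "\<dots> \<le> card {..<p}"
    using \<open>p > 0\<close> by (intro card_mono) auto
  finally show ?thesis by simp
qed

lemma clique_in_blowup:
  assumes "p \<ge> 1" and "a \<in> V" "b \<in> V" "a \<noteq> b" "E a b" "E b a"
  shows "\<exists>K \<subseteq> blowup_verts V E p. is_clique (blowup_adj V E p) K \<and> card K = p + 1"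
proof -
  define e where "e = {a, b}"
  define K where "K = {Inl a, Inl b} \<union> (\<lambda>i. Inr (e, i)) ` {..<p - 1}"
  have "e \<in> edge_set V E" unfolding edge_set_def e_def using assms by blast
  then have "K \<subseteq> blowup_verts V E p" using assms unfolding K_def blowup_verts_def by auto
  moreover have "is_clique (blowup_adj V E p) K"
    using \<open>K \<subseteq> blowup_verts V E p\<close> assms
    unfolding is_clique_def blowup_adj_def by (auto simp: K_def e_def)
  moreover have "card K = p + 1"
    using assms unfolding K_def by (subst card_Un_disjoint) (auto simp: card_image inj_on_def)
  ultimately show ?thesis by blast
qed

lemma clique_of_contains_subgraph:
  assumes "contains_subgraph n E VF EF" and "K \<subseteq> VF" and "is_clique EF K"
  shows "\<exists>K'. is_clique E K' \<and> card K' = card K"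
proof -
  obtain \<phi> where "inj_on \<phi> VF" and hom: "\<forall>u\<in>VF. \<forall>v\<in>VF. EF u v \<longrightarrow> E (\<phi> u) (\<phi> v)"
    using assms(1) unfolding contains_subgraph_def by blast
  then have "inj_on \<phi> K" using \<open>K \<subseteq> VF\<close> by (blast intro: inj_on_subset)
  have "E (\<phi> x) (\<phi> y)" if "x \<in> K" "y \<in> K" "\<phi> x \<noteq> \<phi> y" for x y
    using that assms(2,3) hom unfolding is_clique_def by (metis subsetD)
  then have "is_clique E (\<phi> ` K)" unfolding is_clique_def by blast
  moreover have "card (\<phi> ` K) = card K" using \<open>inj_on \<phi> K\<close> by (rule card_image)
  ultimately show ?thesis by blast
qed

lemma bsf_free_turan_graph:
  assumes "p \<ge> 1" and "k \<in> set ks" and "k \<ge> 1"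
  shows "bsf_free p ks n (turan_graph p m)"
  unfolding bsf_free_def
proof
  let ?V = "sf_verts ks" and ?A = "sf_adj ks"
  obtain j where "j < length ks" "ks ! j = k" using \<open>k \<in> set ks\<close> by (meson in_set_conv_nth)
  then have V: "(j, 0) \<in> ?V" "(j, 1) \<in> ?V" using \<open>k \<ge> 1\<close> by (simp_all add: sf_verts_def)
  then have A: "?A (j, 0) (j, 1)" "?A (j, 1) (j, 0)" by (simp_all add: sf_adj_def)
  obtain K where K: "K \<subseteq> blowup_verts ?V ?A p"
    "is_clique (blowup_adj ?V ?A p) K" "card K = p + 1"
    using clique_in_blowup[OF \<open>p \<ge> 1\<close> V _ A] by auto
  assume "contains_subgraph n (turan_graph p m) (blowup_verts ?V ?A p) (blowup_adj ?V ?A p)"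
  then obtain K' where "is_clique (turan_graph p m) K'" "card K' = p + 1"
    using clique_of_contains_subgraph[OF _ K(1,2)] K(3) by metis
  then show False using card_clique_turan_graph[of p m K'] \<open>p \<ge> 1\<close> by simp
qed

lemma mult_div_lower_bound:
  fixes n p :: nat
  assumes "p > 0"
  shows "(real p - 1) / real p * real n \<le> real ((p - 1) * (n div p)) + real p - 1"
proof -
  have "real n = real p * real (n div p) + real (n mod p)"
    by (metis div_mult_mod_eq of_nat_add of_nat_mult mult.commute)
  then have "(real p - 1) / real p * real n
      = real ((p - 1) * (n div p)) + (real p - 1) * (real (n mod p) / real p)"
    using assms by (simp add: field_simps)
  also have "(real p - 1) * (real (n mod p) / real p) \<le> (real p - 1) * 1"
    using assms by (intro mult_left_mono) auto
  finally show ?thesis by simp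
qed

theorem lemma3p1:
  fixes p q :: nat
  assumes "p \<ge> 2" and "q \<ge> 1"
  shows "\<exists>C::real. \<forall>ks n E.
           length ks = q \<and> sorted_wrt (\<ge>) ks \<and> (\<forall>k\<in>set ks. k \<ge> 1) \<and> n \<ge> 1 \<and>
           spex p ks n E \<longrightarrow>
           spec_rad n E \<ge> (real p - 1) / real p * real n - C"
proof (intro exI allI impI)
  fix ks n E
  assume H: "length ks = q \<and> sorted_wrt (\<ge>) ks \<and> (\<forall>k\<in>set ks. k \<ge> 1) \<and> n \<ge> 1 \<and> spex p ks n E"
  define m where "m = n div p"
  have "p * m \<le> n" by (simp add: m_def)
  have "ks \<noteq> []" using H \<open>q \<ge> 1\<close> by auto
  then have "hd ks \<in> set ks" "hd ks \<ge> 1" using H by simp_all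
  then have "bsf_free p ks n (turan_graph p m)"
    using \<open>p \<ge> 2\<close> by (intro bsf_free_turan_graph) simp_all
  then have "spec_rad n (turan_graph p m) \<le> spec_rad n E"
    using H sgraph_turan_graph[OF \<open>p * m \<le> n\<close>] unfolding spex_def by blast
  moreover have "real ((p - 1) * m) \<le> spec_rad n (turan_graph p m)"
    using spec_rad_turan_graph \<open>p * m \<le> n\<close> H by blast
  moreover have "(real p - 1) / real p * real n \<le> real ((p - 1) * m) + real p - 1"
    unfolding m_def using \<open>p \<ge> 2\<close> by (intro mult_div_lower_bound) simp
  ultimately show "spec_rad n E \<ge> (real p - 1) / real p * real n - (real p - 1)" by linarith
qed

end
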